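(* Let $a\in C^1(\mathbb{R})$ be real valued, let $C>0$ with $a:=a(C^2)>0$, put $\omega=a^2/4$, $b:=2a'(C^2)C^2$, and assume the spectral condition $a'(C^2)\in(-\infty,0)\cup(0,a(C^2)/(\sqrt2C^2))$. Let $\mathbf{C}$ be the operator on $\mathbb{C}^2$-valued functions $$ \mathbf{C}=\begin{pmatrix}0&\mathbf{D}_2\\-\mathbf{D}_1&0\end{pmatrix},\quad \mathbf{D}_1=-\frac{d^2}{dx^2}+\omega-\delta(x)(a+b),\quad \mathbf{D}_2=-\frac{d^2}{dx^2}+\omega-\delta(x)a. $$ Let $\psi_\omega(x)=C(\omega)e^{-\sqrt\omega|x|}$ be the family of solitary waves near $\omega$ (with $C(\omega)$ the local inverse of $C\mapsto a(C^2)^2/4$), $\Phi_\omega=(\psi_\omega,0)$, $T_0=j\Phi_\omega=(0,\psi_\omega)$ and $T_1=\partial_\omega\Phi_\omega=(\partial_\omega\psi_\omega,0)$. Then the generalised null space of $\mathbf{C}$ is two dimensional, is spanned by $T_0,T_1$, and $$ \mathbf{C}T_0=0,\qquad \mathbf{C}T_1=T_0. $$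
   Context: $j=\begin{pmatrix}0&-1\\1&0\end{pmatrix}$. $\delta(x)$ is the Dirac distribution at $0$; $\delta(x)\cdot c$ applied to a function $f$ means $c f(0)\delta(x)$. The operator $\mathbf{C}=j^{-1}\mathbf{B}$ is the linearization (in real vector form, then complexified) of $i\dot\psi=-\psi''-\delta(x)a(|\psi(0)|^2)\psi(0)$ at the solitary wave $e^{i\omega t}\psi_\omega$. *)

theory Defs
  imports "HOL-Analysis.Analysis"
begin

definition d1 :: "(real \<Rightarrow> complex) \<Rightarrow> real \<Rightarrow> complex" where
  "d1 f x = vector_derivative f (at x)"

definition d2 :: "(real \<Rightarrow> complex) \<Rightarrow> real \<Rightarrow> complex" where
  "d2 f x = vector_derivative (d1 f) (at x)"

definition sq_integrable :: "(real \<Rightarrow> complex) \<Rightarrow> bool" where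
  "sq_integrable f \<longleftrightarrow> (\<lambda>x. (cmod (f x))\<^sup>2) integrable_on UNIV"

text \<open>Domain of the operator  -d^2/dx^2 + omega - alpha delta(x)  on L^2(R):
continuous, twice differentiable away from 0, f and f'' square integrable,
one-sided limits of f' at 0 exist and satisfy the jump condition
f'(0+) - f'(0-) = - alpha f(0).\<close>

definition delta_dom :: "real \<Rightarrow> (real \<Rightarrow> complex) \<Rightarrow> bool" where
  "delta_dom \<alpha> f \<longleftrightarrow>
     continuous_on UNIV f \<and>
     (\<forall>x. x \<noteq> 0 \<longrightarrow> f differentiable (at x) \<and> d1 f differentiable (at x)) \<and>
     (\<exists>l r. (d1 f \<longlongrightarrow> l) (at_left 0) \<and> (d1 f \<longlongrightarrow> r) (at_right 0) \<and>
            r - l = - complex_of_real \<alpha> * f 0) \<and>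
     sq_integrable f \<and> sq_integrable (d2 f)"

text \<open>Action of  -d^2/dx^2 + omega  (the delta part is encoded in the domain).
At the origin the value is taken to be the right limit (irrelevant a.e.; it makes
membership of the image in a domain, which requires continuity, meaningful).\<close>

definition delta_op :: "real \<Rightarrow> (real \<Rightarrow> complex) \<Rightarrow> real \<Rightarrow> complex" where
  "delta_op \<omega> f x =
     (let g = (\<lambda>y. - d2 f y + complex_of_real \<omega> * f y)
      in if x = 0 then Lim (at_right 0) g else g x)"

type_synonym vfun = "(real \<Rightarrow> complex) \<times> (real \<Rightarrow> complex)"

text \<open>The operator  C = [[0, D2], [-D1, 0]]  with D1 of delta strength a+b and
D2 of delta strength a.\<close>

definition Cdom :: "real \<Rightarrow> real \<Rightarrow> vfun \<Rightarrow> bool" where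
  "Cdom \<alpha>1 \<alpha>2 u \<longleftrightarrow> delta_dom \<alpha>1 (fst u) \<and> delta_dom \<alpha>2 (snd u)"

definition Cop :: "real \<Rightarrow> vfun \<Rightarrow> vfun" where
  "Cop \<omega> u = (delta_op \<omega> (snd u), (\<lambda>x. - delta_op \<omega> (fst u) x))"

fun Cdom_pow :: "nat \<Rightarrow> real \<Rightarrow> real \<Rightarrow> real \<Rightarrow> vfun \<Rightarrow> bool" where
  "Cdom_pow 0 \<omega> \<alpha>1 \<alpha>2 u = True"
| "Cdom_pow (Suc k) \<omega> \<alpha>1 \<alpha>2 u = (Cdom \<alpha>1 \<alpha>2 u \<and> Cdom_pow k \<omega> \<alpha>1 \<alpha>2 (Cop \<omega> u))"

definition gen_null_space :: "real \<Rightarrow> real \<Rightarrow> real \<Rightarrow> vfun set" where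
  "gen_null_space \<omega> \<alpha>1 \<alpha>2 =
     {u. \<exists>k. Cdom_pow k \<omega> \<alpha>1 \<alpha>2 u \<and> (Cop \<omega> ^^ k) u = (\<lambda>x. 0, \<lambda>x. 0)}"

definition vadd :: "vfun \<Rightarrow> vfun \<Rightarrow> vfun" where
  "vadd u v = (\<lambda>x. fst u x + fst v x, \<lambda>x. snd u x + snd v x)"

definition vscale :: "complex \<Rightarrow> vfun \<Rightarrow> vfun" where
  "vscale c u = (\<lambda>x. c * fst u x, \<lambda>x. c * snd u x)"

end

theory Submission
  imports Defs
begin

text \<open>
Away from the origin, every component f of an element of the generalised null space solves
-f'' + omega f = g on both half lines, where (going down the Jordan chain) g is a polynomial of
degree at most one in |x| times exp (- sqrt omega |x|). Square integrability excludes the growing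
solution exp (sqrt omega |x|) and continuity glues the half lines, so
f = (c0 + c1 |x| + c2 x^2) exp (- sqrt omega |x|), and the delta interaction of strength beta
becomes the linear jump relation 2 (c1 - sqrt omega c0) = - beta c0. Solving D2 u = d psi/d omega
would force a'(C^2) C^2 = a(C^2), which the spectral condition excludes, so the chain T0, T1
cannot be prolonged.
\<close>

lemma integrable_on_UNIV_reflect:
  fixes g :: "real \<Rightarrow> real"
  assumes g: "g integrable_on UNIV" and nonneg: "\<And>x. g x \<ge> 0"
  shows "(\<lambda>x. g (- x)) integrable_on UNIV"
proof -
  have "g absolutely_integrable_on UNIV"
    using g by (rule nonnegative_absolutely_integrable_1) (simp add: nonneg)
  then have "integrable lebesgue (\<lambda>x. g (0 + (-1) * x))"
    by (intro lebesgue_integrable_real_affine) (auto simp: set_integrable_def)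
  then show ?thesis
    by (auto intro: integrable_on_lebesgue)
qed

lemma sq_integrable_reflect: "sq_integrable f \<Longrightarrow> sq_integrable (\<lambda>x. f (- x))"
  unfolding sq_integrable_def by (rule integrable_on_UNIV_reflect) auto

lemma exp_neg_abs_integrable:
  fixes s :: real assumes s: "s > 0"
  shows "(\<lambda>x. exp (- s * \<bar>x\<bar>)) integrable_on UNIV"
proof -
  define g where "g = (\<lambda>x::real. if x \<in> {0..} then exp (- s * x) else 0)"
  have g: "g integrable_on UNIV"
    unfolding g_def using integrable_on_exp_minus_to_infinity[OF s, of 0]
    by (subst integrable_restrict_UNIV) simp
  have "(\<lambda>x. g x + g (- x)) integrable_on UNIV"
    by (intro integrable_add g integrable_on_UNIV_reflect) (simp add: g_def)
  then show ?thesis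
  proof (rule integrable_on_all_intervals_UNIV[rotated 2])
    show "(\<lambda>x. exp (- s * \<bar>x\<bar>)) integrable_on cbox a b" for a b
      by (intro integrable_continuous continuous_intros)
    show "norm (exp (- s * \<bar>x\<bar>)) \<le> g x + g (- x)" for x
      by (cases "x \<ge> 0") (auto simp: g_def)
  qed
qed

lemma has_vector_derivative_reflect:
  "(f has_vector_derivative f') (at (- x)) \<Longrightarrow> ((\<lambda>y. f (- y)) has_vector_derivative - f') (at x)"
  using vector_diff_chain_at[OF has_vector_derivative_minus[OF has_vector_derivative_id], of f f' x]
  by (simp add: o_def)

definition quad_exp :: "complex \<Rightarrow> complex \<Rightarrow> complex \<Rightarrow> real \<Rightarrow> real \<Rightarrow> complex" where
  "quad_exp c0 c1 c2 s t = (c0 + c1 * of_real t + c2 * (of_real t)\<^sup>2) * of_real (exp (- s * t))"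

lemma quad_exp_0 [simp]: "quad_exp c0 c1 c2 s 0 = c0"
  by (simp add: quad_exp_def)

lemma mult_quad_exp: "c * quad_exp c0 c1 c2 s t = quad_exp (c * c0) (c * c1) (c * c2) s t"
  by (simp add: quad_exp_def algebra_simps)

lemma continuous_on_quad_exp [continuous_intros]:
  "continuous_on S f \<Longrightarrow> continuous_on S (\<lambda>x. quad_exp c0 c1 c2 s (f x))"
  unfolding quad_exp_def by (intro continuous_intros)

lemma tendsto_quad_exp [tendsto_intros]:
  "(f \<longlongrightarrow> t) F \<Longrightarrow> ((\<lambda>x. quad_exp c0 c1 c2 s (f x)) \<longlongrightarrow> quad_exp c0 c1 c2 s t) F"
  unfolding quad_exp_def by (intro tendsto_intros)

lemma has_vector_derivative_quad_exp:
  "(quad_exp c0 c1 c2 s has_vector_derivative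
      quad_exp (c1 - of_real s * c0) (2 * c2 - of_real s * c1) (- of_real s * c2) s t) (at t within S)"
proof -
  have alt: "quad_exp a0 a1 a2 s u =
      (\<lambda>z. (a0 + a1 * z + a2 * z\<^sup>2) * exp (- of_real s * z)) (of_real u)" for a0 a1 a2 u
    by (simp add: quad_exp_def flip: exp_of_real)
  have "((\<lambda>z. (c0 + c1 * z + c2 * z\<^sup>2) * exp (- of_real s * z)) has_field_derivative
      (c1 + c2 * (2 * of_real t)) * exp (- of_real s * of_real t)
      + (c0 + c1 * of_real t + c2 * (of_real t)\<^sup>2) * (exp (- of_real s * of_real t) * (- of_real s)))
      (at (of_real t))"
    by (auto intro!: derivative_eq_intros)
  from has_vector_derivative_real_field[OF this, where s=S] show ?thesis
    unfolding alt[abs_def] alt by (simp add: algebra_simps power2_eq_square)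
qed

lemma norm_quadratic_le:
  assumes t: "t \<ge> 0"
  shows "cmod (c0 + c1 * of_real t + c2 * (of_real t)\<^sup>2) \<le> (cmod c0 + cmod c1 + cmod c2) * (1 + t)\<^sup>2"
proof -
  have "cmod (c0 + c1 * of_real t + c2 * (of_real t)\<^sup>2) \<le> cmod c0 + cmod c1 * t + cmod c2 * t\<^sup>2"
    using t by (auto intro!: order_trans[OF norm_triangle_ineq] add_mono simp: norm_mult norm_power)
  moreover have "cmod c0 \<le> cmod c0 * (1 + t)\<^sup>2" "cmod c1 * t \<le> cmod c1 * (1 + t)\<^sup>2"
    "cmod c2 * t\<^sup>2 \<le> cmod c2 * (1 + t)\<^sup>2"
    using t by (auto intro!: mult_left_mono simp: power2_eq_square algebra_simps)
  ultimately show ?thesis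
    by (simp add: algebra_simps)
qed

lemma quad_exp_sq_bound:
  assumes s: "s > 0"
  obtains M where "M \<ge> 0" "\<And>t. t \<ge> 0 \<Longrightarrow> (cmod (quad_exp c0 c1 c2 s t))\<^sup>2 \<le> M * exp (- s * t)"
proof
  define K where "K = cmod c0 + cmod c1 + cmod c2"
  define m where "m = min 1 (s/4)"
  have m: "m > 0" "m \<le> 1" "m \<le> s/4" using s by (auto simp: m_def)
  have K: "K \<ge> 0" by (simp add: K_def)
  show "(K / m\<^sup>2)\<^sup>2 \<ge> 0" by simp
  fix t :: real assume t: "t \<ge> 0"
  note poly = norm_quadratic_le[OF t, of c0 c1 c2, folded K_def]
  have lin_exp: "m * (1 + t) \<le> exp (s * t / 4)"
  proof -
    have "m * t \<le> s / 4 * t" using m t by (intro mult_right_mono) auto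
    then have "m * (1 + t) \<le> 1 + s * t / 4" using m by (simp add: algebra_simps)
    also have "\<dots> \<le> exp (s * t / 4)" by (rule exp_ge_add_one_self)
    finally show ?thesis .
  qed
  have "(cmod (quad_exp c0 c1 c2 s t))\<^sup>2
      = (cmod (c0 + c1 * of_real t + c2 * (of_real t)\<^sup>2))\<^sup>2 * exp (- s * t)^2"
    by (simp add: quad_exp_def norm_mult power_mult_distrib)
  also have "\<dots> \<le> (K * (1 + t)\<^sup>2)\<^sup>2 * exp (- s * t)^2"
    by (intro mult_right_mono power_mono poly) auto
  also have "\<dots> = K\<^sup>2 / m^4 * ((m * (1 + t))^4 * exp (- s * t)^2)"
    using m by (simp add: field_simps power2_eq_square power4_eq_xxxx)
  also have "\<dots> \<le> K\<^sup>2 / m^4 * (exp (s * t / 4) ^ 4 * exp (- s * t)^2)"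
    using m t K lin_exp by (intro mult_left_mono mult_right_mono power_mono) auto
  also have "exp (s * t / 4) ^ 4 * exp (- s * t)^2 = exp (- s * t)"
    by (simp flip: exp_of_nat_mult exp_add)
  finally show "(cmod (quad_exp c0 c1 c2 s t))\<^sup>2 \<le> (K / m\<^sup>2)\<^sup>2 * exp (- s * t)"
    by (simp add: power2_eq_square power4_eq_xxxx field_simps)
qed

lemma quad_exp_bounded:
  assumes s: "s > 0"
  obtains B where "\<And>t. t \<ge> 0 \<Longrightarrow> cmod (quad_exp c0 c1 c2 s t) \<le> B"
proof -
  obtain M where M: "M \<ge> 0" "\<And>t. t \<ge> 0 \<Longrightarrow> (cmod (quad_exp c0 c1 c2 s t))\<^sup>2 \<le> M * exp (- s * t)"
    using quad_exp_sq_bound[OF s] by blast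
  have "cmod (quad_exp c0 c1 c2 s t) \<le> sqrt M" if t: "t \<ge> 0" for t
  proof -
    have "(cmod (quad_exp c0 c1 c2 s t))\<^sup>2 \<le> M * 1"
      using M(2)[OF t] mult_left_mono[of "exp (- s * t)" 1 M] M(1) s t by fastforce
    then show ?thesis by (simp add: real_le_rsqrt)
  qed
  then show thesis by (rule that)
qed

lemma sq_integrable_even_quad_exp:
  assumes s: "s > 0" and f: "\<And>x. x \<noteq> 0 \<Longrightarrow> f x = quad_exp c0 c1 c2 s \<bar>x\<bar>"
  shows "sq_integrable f"
proof -
  obtain M where M: "\<And>t. t \<ge> 0 \<Longrightarrow> (cmod (quad_exp c0 c1 c2 s t))\<^sup>2 \<le> M * exp (- s * t)"
    using quad_exp_sq_bound[OF s] by blast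
  have "(\<lambda>x. M * exp (- s * \<bar>x\<bar>)) integrable_on UNIV"
    using integrable_cmul[OF exp_neg_abs_integrable[OF s], of M] by simp
  then have "(\<lambda>x. (cmod (quad_exp c0 c1 c2 s \<bar>x\<bar>))\<^sup>2) integrable_on UNIV"
  proof (rule integrable_on_all_intervals_UNIV[rotated 2])
    show "(\<lambda>x. (cmod (quad_exp c0 c1 c2 s \<bar>x\<bar>))\<^sup>2) integrable_on cbox a b" for a b
      by (intro integrable_continuous continuous_intros)
    show "norm ((cmod (quad_exp c0 c1 c2 s \<bar>x\<bar>))\<^sup>2) \<le> M * exp (- s * \<bar>x\<bar>)" for x
      using M[of "\<bar>x\<bar>"] by simp
  qed
  then show ?thesis
    unfolding sq_integrable_def by (rule integrable_spike[where S="{0}"]) (auto simp: f)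
qed

lemma has_vector_derivative_even_quad_exp:
  assumes x: "x \<noteq> 0"
  shows "((\<lambda>y. quad_exp c0 c1 c2 s \<bar>y\<bar>) has_vector_derivative
          of_real (sgn x) * quad_exp (c1 - of_real s * c0) (2 * c2 - of_real s * c1) (- of_real s * c2) s \<bar>x\<bar>)
         (at x)"
proof (cases "x > 0")
  case True
  have "((\<lambda>y. quad_exp c0 c1 c2 s \<bar>y\<bar>) has_vector_derivative
          quad_exp (c1 - of_real s * c0) (2 * c2 - of_real s * c1) (- of_real s * c2) s x) (at x)"
    by (rule has_vector_derivative_transform_within_open[OF has_vector_derivative_quad_exp, where S="{0<..}"])
       (use True in auto)
  with True show ?thesis by simp
next
  case False
  with x have "x < 0" by auto
  then have "((\<lambda>y. quad_exp c0 c1 c2 s \<bar>y\<bar>) has_vector_derivative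
          - quad_exp (c1 - of_real s * c0) (2 * c2 - of_real s * c1) (- of_real s * c2) s (- x)) (at x)"
    by (intro has_vector_derivative_transform_within_open[where S="{..<0}",
          OF has_vector_derivative_reflect[OF has_vector_derivative_quad_exp]]) auto
  with \<open>x < 0\<close> show ?thesis by simp
qed

lemma d1_even_quad_exp:
  "x \<noteq> 0 \<Longrightarrow> d1 (\<lambda>y. quad_exp c0 c1 c2 s \<bar>y\<bar>) x =
     of_real (sgn x) * quad_exp (c1 - of_real s * c0) (2 * c2 - of_real s * c1) (- of_real s * c2) s \<bar>x\<bar>"
  unfolding d1_def by (rule vector_derivative_at[OF has_vector_derivative_even_quad_exp])

lemma has_vector_derivative_d1_even_quad_exp:
  assumes x: "x \<noteq> 0"
  shows "(d1 (\<lambda>y. quad_exp c0 c1 c2 s \<bar>y\<bar>) has_vector_derivative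
          quad_exp (2 * c2 - of_real s * c1 - of_real s * (c1 - of_real s * c0))
             (2 * (- of_real s * c2) - of_real s * (2 * c2 - of_real s * c1))
             (- of_real s * (- of_real s * c2)) s \<bar>x\<bar>) (at x)"
proof -
  let ?q = "quad_exp (c1 - of_real s * c0) (2 * c2 - of_real s * c1) (- of_real s * c2) s"
  have "((\<lambda>y. of_real (sgn y) * ?q \<bar>y\<bar>) has_vector_derivative
          quad_exp (2 * c2 - of_real s * c1 - of_real s * (c1 - of_real s * c0))
             (2 * (- of_real s * c2) - of_real s * (2 * c2 - of_real s * c1))
             (- of_real s * (- of_real s * c2)) s \<bar>x\<bar>) (at x)"
  proof (cases "x > 0")
    case True
    show ?thesis
      unfolding abs_of_pos[OF True]
      by (rule has_vector_derivative_transform_within_open[OF has_vector_derivative_quad_exp,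
            where S="{0<..}"]) (use True in auto)
  next
    case False
    with x have "x < 0" by auto
    have "((\<lambda>y. - ?q (- y)) has_vector_derivative
         - (- quad_exp (2 * c2 - of_real s * c1 - of_real s * (c1 - of_real s * c0))
             (2 * (- of_real s * c2) - of_real s * (2 * c2 - of_real s * c1))
             (- of_real s * (- of_real s * c2)) s (- x))) (at x)"
      by (intro has_vector_derivative_minus has_vector_derivative_reflect has_vector_derivative_quad_exp)
    then show ?thesis
      unfolding abs_of_neg[OF \<open>x < 0\<close>] minus_minus
      by (rule has_vector_derivative_transform_within_open[where S="{..<0}"]) (use \<open>x < 0\<close> in auto)
  qed
  then show ?thesis
    by (rule has_vector_derivative_transform_within_open[where S="-{0}"]) (use x d1_even_quad_exp in auto)
qed

lemma d2_even_quad_exp: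
  "x \<noteq> 0 \<Longrightarrow> d2 (\<lambda>y. quad_exp c0 c1 c2 s \<bar>y\<bar>) x =
     quad_exp (2 * c2 - of_real s * c1 - of_real s * (c1 - of_real s * c0))
       (2 * (- of_real s * c2) - of_real s * (2 * c2 - of_real s * c1))
       (- of_real s * (- of_real s * c2)) s \<bar>x\<bar>"
  unfolding d2_def by (rule vector_derivative_at[OF has_vector_derivative_d1_even_quad_exp])

lemma d1_even_quad_exp_tendsto_right:
  "(d1 (\<lambda>y. quad_exp c0 c1 c2 s \<bar>y\<bar>) \<longlongrightarrow> c1 - of_real s * c0) (at_right 0)"
proof -
  let ?q = "quad_exp (c1 - of_real s * c0) (2 * c2 - of_real s * c1) (- of_real s * c2) s"
  have "(?q \<longlongrightarrow> ?q 0) (at_right 0)"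
    by (intro tendsto_intros)
  then have "(?q \<longlongrightarrow> c1 - of_real s * c0) (at_right 0)"
    by simp
  then show ?thesis
    by (rule Lim_transform_eventually)
       (unfold eventually_at_filter, intro always_eventually, auto simp: d1_even_quad_exp)
qed

lemma d1_even_quad_exp_tendsto_left:
  "(d1 (\<lambda>y. quad_exp c0 c1 c2 s \<bar>y\<bar>) \<longlongrightarrow> - (c1 - of_real s * c0)) (at_left 0)"
proof -
  let ?q = "quad_exp (c1 - of_real s * c0) (2 * c2 - of_real s * c1) (- of_real s * c2) s"
  have "((\<lambda>y. - ?q (- y)) \<longlongrightarrow> - ?q (- 0)) (at_left 0)"
    by (intro tendsto_intros)
  then have "((\<lambda>y. - ?q (- y)) \<longlongrightarrow> - (c1 - of_real s * c0)) (at_left 0)"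
    by simp
  then show ?thesis
    by (rule Lim_transform_eventually)
       (unfold eventually_at_filter, intro always_eventually, auto simp: d1_even_quad_exp)
qed

lemma delta_dom_even_quad_exp_iff:
  assumes s: "s > 0"
  shows "delta_dom \<beta> (\<lambda>y. quad_exp c0 c1 c2 s \<bar>y\<bar>) \<longleftrightarrow> 2 * (c1 - of_real s * c0) = - of_real \<beta> * c0"
    (is "delta_dom \<beta> ?f \<longleftrightarrow> _")
proof
  assume "delta_dom \<beta> ?f"
  then obtain l r where "(d1 ?f \<longlongrightarrow> l) (at_left 0)" "(d1 ?f \<longlongrightarrow> r) (at_right 0)"
      "r - l = - of_real \<beta> * ?f 0"
    unfolding delta_dom_def by blast
  moreover note tendsto_unique[OF trivial_limit_at_left_real d1_even_quad_exp_tendsto_left]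
    tendsto_unique[OF trivial_limit_at_right_real d1_even_quad_exp_tendsto_right]
  ultimately show "2 * (c1 - of_real s * c0) = - of_real \<beta> * c0"
    by (metis abs_zero mult_2 quad_exp_0 diff_minus_eq_add)
next
  assume jump: "2 * (c1 - of_real s * c0) = - of_real \<beta> * c0"
  show "delta_dom \<beta> ?f"
    unfolding delta_dom_def
  proof (intro conjI allI impI exI)
    show "continuous_on UNIV ?f" by (intro continuous_intros)
    fix x :: real assume x: "x \<noteq> 0"
    show "?f differentiable at x"
      by (rule differentiableI_vector[OF has_vector_derivative_even_quad_exp[OF x]])
    show "d1 ?f differentiable at x"
      by (rule differentiableI_vector[OF has_vector_derivative_d1_even_quad_exp[OF x]])
  next
    show "c1 - of_real s * c0 - - (c1 - of_real s * c0) = - of_real \<beta> * ?f 0"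
      using jump by (simp add: algebra_simps)
    show "sq_integrable ?f" "sq_integrable (d2 ?f)"
      by (rule sq_integrable_even_quad_exp[OF s], simp add: d2_even_quad_exp)+
  qed (fact d1_even_quad_exp_tendsto_left d1_even_quad_exp_tendsto_right)+
qed

lemma delta_op_even_quad_exp:
  "delta_op (s\<^sup>2) (\<lambda>y. quad_exp c0 c1 c2 s \<bar>y\<bar>) =
     (\<lambda>x. quad_exp (2 * of_real s * c1 - 2 * c2) (4 * of_real s * c2) 0 s \<bar>x\<bar>)"
proof -
  let ?f = "\<lambda>y. quad_exp c0 c1 c2 s \<bar>y\<bar>"
  let ?g = "\<lambda>x. quad_exp (2 * of_real s * c1 - 2 * c2) (4 * of_real s * c2) 0 s \<bar>x\<bar>"
  have eq: "- d2 ?f y + of_real (s\<^sup>2) * ?f y = ?g y" if "y \<noteq> 0" for y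
    unfolding d2_even_quad_exp[OF that] by (simp add: quad_exp_def algebra_simps power2_eq_square)
  have "((\<lambda>y. - d2 ?f y + of_real (s\<^sup>2) * ?f y) \<longlongrightarrow> ?g 0) (at_right 0)"
  proof (rule Lim_transform_eventually)
    show "(?g \<longlongrightarrow> ?g 0) (at_right 0)"
      by (intro tendsto_intros)
    show "\<forall>\<^sub>F y in at_right 0. ?g y = - d2 ?f y + of_real (s\<^sup>2) * ?f y"
      unfolding eventually_at_filter by (intro always_eventually allI impI) (metis eq)
  qed
  then have "Lim (at_right 0) (\<lambda>y. - d2 ?f y + of_real (s\<^sup>2) * ?f y) = ?g 0"
    by (rule tendsto_Lim[OF trivial_limit_at_right_real])
  then show ?thesis
    unfolding delta_op_def Let_def using eq by (auto simp: fun_eq_iff)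
qed

lemma linear_ode_half_line_solution:
  fixes k :: "real \<Rightarrow> complex"
  assumes k: "\<And>x. x > 0 \<Longrightarrow> (k has_vector_derivative of_real \<mu> * k x) (at x)"
  obtains K where "\<And>x. x > 0 \<Longrightarrow> k x = K * of_real (exp (\<mu> * x))"
proof -
  define m where "m x = of_real (exp (- \<mu> * x)) * k x" for x
  have "(m has_vector_derivative 0) (at x within {0<..})" if "x > 0" for x
  proof -
    have "(m has_vector_derivative
        of_real (exp (- \<mu> * x)) * (of_real \<mu> * k x) + of_real (exp (- \<mu> * x) * (- \<mu>)) * k x) (at x)"
      unfolding m_def[abs_def]
      by (intro has_vector_derivative_mult has_vector_derivative_of_real k that)
         (auto intro!: derivative_eq_intros)
    then show ?thesis
      by (simp add: algebra_simps has_vector_derivative_at_within)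
  qed
  then obtain K where K: "\<And>x. x \<in> {0<..} \<Longrightarrow> m x = K"
    using has_vector_derivative_zero_constant[of "{0<..}" m] by auto
  have "k x = K * of_real (exp (\<mu> * x))" if "x > 0" for x
  proof -
    have "k x = of_real (exp (\<mu> * x)) * m x"
      by (simp add: m_def mult.assoc[symmetric] flip: of_real_mult exp_add)
    then show ?thesis using K that by simp
  qed
  then show thesis by (rule that)
qed

lemma second_order_ode_half_line_solution:
  fixes h h' h'' :: "real \<Rightarrow> complex"
  assumes s: "s \<noteq> 0"
    and h: "\<And>x. x > 0 \<Longrightarrow> (h has_vector_derivative h' x) (at x)"
    and h': "\<And>x. x > 0 \<Longrightarrow> (h' has_vector_derivative h'' x) (at x)"
    and ode: "\<And>x. x > 0 \<Longrightarrow> h'' x = of_real (s\<^sup>2) * h x"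
  obtains A K where "\<And>x. x > 0 \<Longrightarrow> h x = A * of_real (exp (- s * x)) + K * of_real (exp (s * x))"
proof -
  \<comment> \<open>factor d^2/dx^2 - s^2 = (d/dx - s) (d/dx + s)\<close>
  define k where "k x = h' x + of_real s * h x" for x
  have "(k has_vector_derivative of_real s * k x) (at x)" if "x > 0" for x
  proof -
    have "(k has_vector_derivative h'' x + of_real s * h' x) (at x)"
      unfolding k_def[abs_def] using h h' that by (auto intro!: derivative_eq_intros)
    then show ?thesis
      using ode[OF that] by (simp add: k_def algebra_simps power2_eq_square)
  qed
  then obtain K where K: "\<And>x. x > 0 \<Longrightarrow> k x = K * of_real (exp (s * x))"
    by (rule linear_ode_half_line_solution) auto
  define n where "n x = h x - K / of_real (2 * s) * of_real (exp (s * x))" for x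
  have "(n has_vector_derivative of_real (- s) * n x) (at x)" if "x > 0" for x
  proof -
    have n': "(n has_vector_derivative h' x - K / of_real (2 * s) * (of_real (exp (s * x) * s))) (at x)"
      unfolding n_def[abs_def]
      using h[OF that] by (auto intro!: derivative_eq_intros)
    have h'_eq: "h' x = K * of_real (exp (s * x)) - of_real s * h x"
      using K[OF that] by (simp add: k_def algebra_simps)
    have "h' x - K / of_real (2 * s) * (of_real (exp (s * x) * s)) = of_real (- s) * n x"
      unfolding h'_eq using s by (simp add: n_def field_simps)
    with n' show ?thesis
      by simp
  qed
  then obtain A where "\<And>x. x > 0 \<Longrightarrow> n x = A * of_real (exp (- s * x))"
    by (rule linear_ode_half_line_solution) auto
  then show thesis
    by (intro that[of A "K / of_real (2 * s)"]) (simp add: n_def algebra_simps)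
qed

lemma sq_integrable_growing_exp_coeff_eq_0:
  fixes f g :: "real \<Rightarrow> complex"
  assumes s: "s > 0" and f: "sq_integrable f"
    and g: "\<And>x. x > 0 \<Longrightarrow> cmod (g x) \<le> B"
    and f_eq: "\<And>x. x > 0 \<Longrightarrow> f x = g x + K * of_real (exp (s * x))"
  shows "K = 0"
proof (rule ccontr)
  assume K: "K \<noteq> 0"
  let ?F = "\<lambda>x. (cmod (f x))\<^sup>2"
  have F: "?F integrable_on UNIV" using f by (simp add: sq_integrable_def)
  define X where "X = \<bar>B\<bar> / (cmod K * s) + 1"
  have X: "X > 0" using K s by (simp add: X_def add_nonneg_pos)
  have large: "(cmod K)\<^sup>2 \<le> ?F x" if x: "x \<ge> X" for x
  proof -
    have "\<bar>B\<bar> / (cmod K * s) \<le> x"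
      using x by (simp add: X_def)
    then have "\<bar>B\<bar> \<le> cmod K * s * x"
      using K s by (simp add: field_simps)
    also have "\<dots> \<le> cmod K * (exp (s * x) - 1)"
      using mult_left_mono[OF exp_ge_add_one_self[of "s * x"], of "cmod K"] by (simp add: algebra_simps)
    finally have "cmod K + B \<le> cmod (K * of_real (exp (s * x)))"
      by (simp add: norm_mult algebra_simps)
    also have "\<dots> \<le> cmod (f x) + cmod (g x)"
      using f_eq[of x] X x norm_triangle_ineq4[of "f x" "g x"] by simp
    finally have "cmod K \<le> cmod (f x)" using g[of x] X x by simp
    then show ?thesis by (simp add: power_mono)
  qed
  define L where "L = integral UNIV ?F / (cmod K)\<^sup>2 + 1"
  have "integral UNIV ?F \<ge> 0"
    using F by (intro integral_nonneg) auto
  then have L: "L > 0" "L * (cmod K)\<^sup>2 > integral UNIV ?F"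
    using K by (simp_all add: L_def field_simps add_pos_nonneg)
  have "L * (cmod K)\<^sup>2 = integral {X..X+L} (\<lambda>x. (cmod K)\<^sup>2)"
    using L by simp
  also have "\<dots> \<le> integral {X..X+L} ?F"
    using F by (intro integral_le large integrable_on_subinterval[OF F]) auto
  also have "\<dots> \<le> integral UNIV ?F"
    by (intro integral_subset_le integrable_on_subinterval[OF F] F) auto
  finally show False using L by simp
qed

lemma half_line_solution_eq_quad_exp:
  fixes f f' f'' :: "real \<Rightarrow> complex"
  assumes s: "s > 0" and sq: "sq_integrable f"
    and f: "\<And>x. x > 0 \<Longrightarrow> (f has_vector_derivative f' x) (at x)"
    and f': "\<And>x. x > 0 \<Longrightarrow> (f' has_vector_derivative f'' x) (at x)"
    and ode: "\<And>x. x > 0 \<Longrightarrow>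
      - f'' x + of_real (s\<^sup>2) * f x = quad_exp (2 * of_real s * p1 - 2 * p2) (4 * of_real s * p2) 0 s x"
  obtains A where "\<And>x. x > 0 \<Longrightarrow> f x = quad_exp A p1 p2 s x"
proof -
  let ?P = "quad_exp 0 p1 p2 s"
  let ?P' = "quad_exp (p1 - of_real s * 0) (2 * p2 - of_real s * p1) (- of_real s * p2) s"
  let ?P'' = "quad_exp (2 * p2 - of_real s * p1 - of_real s * (p1 - of_real s * 0))
                (2 * (- of_real s * p2) - of_real s * (2 * p2 - of_real s * p1))
                (- of_real s * (- of_real s * p2)) s"
  have P: "- ?P'' x + of_real (s\<^sup>2) * ?P x = quad_exp (2 * of_real s * p1 - 2 * p2) (4 * of_real s * p2) 0 s x"
    for x by (simp add: quad_exp_def algebra_simps power2_eq_square)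
  obtain A K where AK: "\<And>x. x > 0 \<Longrightarrow>
      f x - ?P x = A * of_real (exp (- s * x)) + K * of_real (exp (s * x))"
  proof (rule second_order_ode_half_line_solution[of s "\<lambda>x. f x - ?P x" "\<lambda>x. f' x - ?P' x"])
    fix x :: real assume x: "x > 0"
    show "((\<lambda>x. f x - ?P x) has_vector_derivative f' x - ?P' x) (at x)"
      by (intro has_vector_derivative_diff f x has_vector_derivative_quad_exp)
    show "((\<lambda>x. f' x - ?P' x) has_vector_derivative f'' x - ?P'' x) (at x)"
      by (intro has_vector_derivative_diff f' x has_vector_derivative_quad_exp)
    show "f'' x - ?P'' x = of_real (s\<^sup>2) * (f x - ?P x)"
      using ode[OF x] P[of x] by (simp add: algebra_simps)
  qed (use s in auto)
  obtain B where B: "\<And>x. x \<ge> 0 \<Longrightarrow> cmod (quad_exp A p1 p2 s x) \<le> B"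
    using quad_exp_bounded[OF s] by blast
  have f_eq: "f x = quad_exp A p1 p2 s x + K * of_real (exp (s * x))" if "x > 0" for x
    using AK[OF that] by (simp add: quad_exp_def algebra_simps)
  have "K = 0"
    by (rule sq_integrable_growing_exp_coeff_eq_0[OF s sq _ f_eq, of B]) (use B in auto)
  with f_eq show thesis by (intro that[of A]) simp
qed

lemma eq_at_0_if_eq_on_pos:
  fixes f g :: "real \<Rightarrow> 'a::t2_space"
  assumes "isCont f 0" "isCont g 0" "\<And>x. x > 0 \<Longrightarrow> f x = g x"
  shows "f 0 = g 0"
proof (rule tendsto_unique[OF trivial_limit_at_right_real])
  show "(f \<longlongrightarrow> f 0) (at_right 0)"
    using assms(1) by (simp add: isCont_def filterlim_at_split)
  have "(g \<longlongrightarrow> g 0) (at_right 0)"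
    using assms(2) by (simp add: isCont_def filterlim_at_split)
  then show "(f \<longlongrightarrow> g 0) (at_right 0)"
    by (rule Lim_transform_eventually) (auto simp: eventually_at_filter assms(3))
qed

lemma delta_dom_solution_eq_even_quad_exp:
  fixes f :: "real \<Rightarrow> complex"
  assumes s: "s > 0" and dom: "delta_dom \<beta> f"
    and ode: "\<And>x. x \<noteq> 0 \<Longrightarrow>
      delta_op (s\<^sup>2) f x = quad_exp (2 * of_real s * p1 - 2 * p2) (4 * of_real s * p2) 0 s \<bar>x\<bar>"
  shows "f = (\<lambda>x. quad_exp (f 0) p1 p2 s \<bar>x\<bar>)"
proof -
  have cont: "continuous_on UNIV f" and sq: "sq_integrable f"
    using dom by (simp_all add: delta_dom_def)
  have f': "(f has_vector_derivative d1 f x) (at x)"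
    and f'': "(d1 f has_vector_derivative d2 f x) (at x)" if "x \<noteq> 0" for x
    using dom that by (simp_all add: delta_dom_def d1_def d2_def vector_derivative_works[symmetric])
  have ode': "- d2 f x + of_real (s\<^sup>2) * f x =
      quad_exp (2 * of_real s * p1 - 2 * p2) (4 * of_real s * p2) 0 s \<bar>x\<bar>" if "x \<noteq> 0" for x
    using ode[OF that] that by (simp add: delta_op_def)
  obtain A\<^sub>r where right: "\<And>x. x > 0 \<Longrightarrow> f x = quad_exp A\<^sub>r p1 p2 s x"
    by (rule half_line_solution_eq_quad_exp[OF s sq f' f'']) (use ode' in auto)
  obtain A\<^sub>l where left: "\<And>x. x > 0 \<Longrightarrow> f (- x) = quad_exp A\<^sub>l p1 p2 s x"
  proof (rule half_line_solution_eq_quad_exp[OF s sq_integrable_reflect[OF sq]])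
    fix x :: real assume x: "x > 0"
    show "((\<lambda>y. f (- y)) has_vector_derivative - d1 f (- x)) (at x)"
      by (rule has_vector_derivative_reflect) (use f' x in simp)
    show "((\<lambda>y. - d1 f (- y)) has_vector_derivative d2 f (- x)) (at x)"
      using has_vector_derivative_minus[OF has_vector_derivative_reflect[OF f''[of "- x"]]] x by simp
    show "- d2 f (- x) + of_real (s\<^sup>2) * f (- x) =
        quad_exp (2 * of_real s * p1 - 2 * p2) (4 * of_real s * p2) 0 s x"
      using ode'[of "- x"] x by simp
  qed auto
  have "isCont f x" for x
    using cont by (simp add: continuous_on_eq_continuous_at)
  then have f_cont: "isCont f 0" and f_reflect_cont: "isCont (\<lambda>x. f (- x)) 0"
    by (auto intro!: isCont_o2[where f=uminus and g=f] isCont_minus continuous_ident)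
  have quad_exp_cont: "isCont (quad_exp A p1 p2 s) 0" for A
    using continuous_on_quad_exp[of UNIV "\<lambda>x. x"] by (simp add: continuous_on_eq_continuous_at)
  have "f 0 = quad_exp A\<^sub>r p1 p2 s 0"
    by (rule eq_at_0_if_eq_on_pos[OF f_cont quad_exp_cont right])
  moreover have "f (- 0) = quad_exp A\<^sub>l p1 p2 s 0"
    by (rule eq_at_0_if_eq_on_pos[OF f_reflect_cont quad_exp_cont left])
  ultimately have "f 0 = A\<^sub>r" and "f 0 = A\<^sub>l"
    by simp_all
  show ?thesis
  proof
    fix x :: real
    consider "x > 0" | "x < 0" | "x = 0" by linarith
    then show "f x = quad_exp (f 0) p1 p2 s \<bar>x\<bar>"
      by cases (use right left[of "- x"] \<open>f 0 = A\<^sub>r\<close> \<open>f 0 = A\<^sub>l\<close> in auto)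
  qed
qed

text \<open>
With s = sqrt omega, C = C(omega) and D = C'(omega), the profiles below are psi_omega and
d psi_omega / d omega, and chain_comb s C D c0 c1 is c0 T0 + c1 T1.
\<close>

definition soliton_profile :: "real \<Rightarrow> real \<Rightarrow> real \<Rightarrow> complex" where
  "soliton_profile s C x = quad_exp (of_real C) 0 0 s \<bar>x\<bar>"

definition soliton_profile_deriv :: "real \<Rightarrow> real \<Rightarrow> real \<Rightarrow> real \<Rightarrow> complex" where
  "soliton_profile_deriv s C D x = quad_exp (of_real D) (- of_real (C / (2 * s))) 0 s \<bar>x\<bar>"

lemma delta_dom_soliton_profile:
  "s > 0 \<Longrightarrow> delta_dom (2 * s) (\<lambda>x. c * soliton_profile s C x)"
  by (simp add: soliton_profile_def mult_quad_exp delta_dom_even_quad_exp_iff)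

lemma delta_dom_soliton_profile_deriv:
  assumes s: "s > 0" and CD: "s * b * D = C"
  shows "delta_dom (2 * s + b) (\<lambda>x. c * soliton_profile_deriv s C D x)"
proof -
  have "complex_of_real C = of_real s * of_real b * of_real D"
    by (simp flip: CD)
  with s show ?thesis
    by (simp add: soliton_profile_deriv_def mult_quad_exp delta_dom_even_quad_exp_iff field_simps)
qed

lemma delta_op_soliton_profile: "delta_op (s\<^sup>2) (\<lambda>x. c * soliton_profile s C x) = (\<lambda>x. 0)"
  unfolding soliton_profile_def mult_quad_exp delta_op_even_quad_exp by (simp add: quad_exp_def)

lemma delta_op_soliton_profile_deriv:
  "s > 0 \<Longrightarrow> delta_op (s\<^sup>2) (\<lambda>x. c * soliton_profile_deriv s C D x) = (\<lambda>x. - c * soliton_profile s C x)"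
  unfolding soliton_profile_deriv_def mult_quad_exp delta_op_even_quad_exp
  by (simp add: soliton_profile_def fun_eq_iff quad_exp_def field_simps)

lemma delta_op_preimage_soliton_profile_deriv:
  assumes s: "s > 0" and C: "C \<noteq> 0" and nondeg: "4 * s\<^sup>2 * D \<noteq> C"
    and dom: "delta_dom (2 * s) u"
    and op: "delta_op (s\<^sup>2) u = (\<lambda>x. c * soliton_profile_deriv s C D x)"
  shows "c = 0 \<and> u = (\<lambda>x. u 0 / of_real C * soliton_profile s C x)"
proof -
  define p2 where "p2 = - c * of_real (C / (8 * s\<^sup>2))"
  define p1 where "p1 = (c * of_real D + 2 * p2) / of_real (2 * s)"
  have "2 * of_real s * p1 - 2 * p2 = c * of_real D" "4 * of_real s * p2 = c * - of_real (C / (2 * s))"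
    using s by (simp_all add: p1_def p2_def field_simps power2_eq_square)
  then have u: "u = (\<lambda>x. quad_exp (u 0) p1 p2 s \<bar>x\<bar>)"
    by (intro delta_dom_solution_eq_even_quad_exp[OF s dom])
       (simp add: op soliton_profile_deriv_def mult_quad_exp)
  with dom have "2 * (p1 - of_real s * u 0) = - of_real (2 * s) * u 0"
    using delta_dom_even_quad_exp_iff[OF s] by metis
  \<comment> \<open>the jump condition forces p1 = 0, which the nondegeneracy turns into c = 0\<close>
  then have "c * of_real ((4 * s\<^sup>2 * D - C) / (8 * s ^ 3)) = 0"
    using s by (simp add: p1_def p2_def field_simps power2_eq_square power3_eq_cube)
  then have "c = 0"
    using s nondeg by (simp only: mult_eq_0_iff of_real_eq_0_iff divide_eq_0_iff) auto
  with u C show ?thesis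
    by (simp add: p1_def p2_def soliton_profile_def mult_quad_exp)
qed

lemma delta_op_preimage_soliton_profile:
  assumes s: "s > 0" and C: "C \<noteq> 0" and CD: "s * b * D = C"
    and dom: "delta_dom (2 * s + b) u"
    and op: "delta_op (s\<^sup>2) u = (\<lambda>x. - c * soliton_profile s C x)"
  shows "u = (\<lambda>x. c * soliton_profile_deriv s C D x)"
proof -
  have u: "u = (\<lambda>x. quad_exp (u 0) (- c * of_real (C / (2 * s))) 0 s \<bar>x\<bar>)"
    by (rule delta_dom_solution_eq_even_quad_exp[OF s dom])
       (use s in \<open>simp add: op soliton_profile_def quad_exp_def field_simps\<close>)
  with dom have "2 * (- c * of_real (C / (2 * s)) - of_real s * u 0) = - of_real (2 * s + b) * u 0"
    using delta_dom_even_quad_exp_iff[OF s] by metis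
  then have "u 0 = c * of_real D"
    using s C by (auto simp: field_simps simp flip: CD)
  with u show ?thesis
    by (simp add: soliton_profile_deriv_def mult_quad_exp)
qed

definition chain_comb :: "real \<Rightarrow> real \<Rightarrow> real \<Rightarrow> complex \<Rightarrow> complex \<Rightarrow> vfun" where
  "chain_comb s C D c0 c1 = ((\<lambda>x. c1 * soliton_profile_deriv s C D x), (\<lambda>x. c0 * soliton_profile s C x))"

lemma chain_comb_eq_vadd_vscale:
  "chain_comb s C D c0 c1 = vadd (vscale c0 (chain_comb s C D 1 0)) (vscale c1 (chain_comb s C D 0 1))"
  by (simp add: chain_comb_def vadd_def vscale_def)

lemma chain_comb_zero: "chain_comb s C D 0 0 = ((\<lambda>x. 0), (\<lambda>x. 0))"
  by (simp add: chain_comb_def)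

lemma chain_comb_eq_0_iff:
  assumes "C \<noteq> 0" "D \<noteq> 0"
  shows "chain_comb s C D c0 c1 = ((\<lambda>x. 0), (\<lambda>x. 0)) \<longleftrightarrow> c0 = 0 \<and> c1 = 0"
proof
  assume "chain_comb s C D c0 c1 = ((\<lambda>x. 0), (\<lambda>x. 0))"
  then have "fst (chain_comb s C D c0 c1) 0 = 0" "snd (chain_comb s C D c0 c1) 0 = 0"
    by simp_all
  with assms show "c0 = 0 \<and> c1 = 0"
    by (simp add: chain_comb_def soliton_profile_def soliton_profile_deriv_def)
qed (simp add: chain_comb_zero)

lemma Cdom_chain_comb:
  "s > 0 \<Longrightarrow> s * b * D = C \<Longrightarrow> Cdom (2 * s + b) (2 * s) (chain_comb s C D c0 c1)"
  by (simp add: Cdom_def chain_comb_def delta_dom_soliton_profile delta_dom_soliton_profile_deriv)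

lemma Cop_chain_comb: "s > 0 \<Longrightarrow> Cop (s\<^sup>2) (chain_comb s C D c0 c1) = chain_comb s C D c1 0"
  by (simp add: Cop_def chain_comb_def delta_op_soliton_profile delta_op_soliton_profile_deriv)

lemma Cop_preimage_chain_comb:
  assumes s: "s > 0" and C: "C \<noteq> 0" and CD: "s * b * D = C" and nondeg: "4 * s\<^sup>2 * D \<noteq> C"
    and dom: "Cdom (2 * s + b) (2 * s) u"
    and op: "Cop (s\<^sup>2) u = chain_comb s C D c0 c1"
  shows "c1 = 0 \<and> u = chain_comb s C D (snd u 0 / of_real C) c0"
proof -
  obtain u1 u2 where u: "u = (u1, u2)" by (cases u)
  have op2: "delta_op (s\<^sup>2) u2 = (\<lambda>x. c1 * soliton_profile_deriv s C D x)"
    and op1: "(\<lambda>x. - delta_op (s\<^sup>2) u1 x) = (\<lambda>x. c0 * soliton_profile s C x)"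
    using op by (simp_all add: Cop_def chain_comb_def u)
  have dom1: "delta_dom (2 * s + b) u1" and dom2: "delta_dom (2 * s) u2"
    using dom by (simp_all add: Cdom_def u)
  have u2: "c1 = 0 \<and> u2 = (\<lambda>x. u2 0 / of_real C * soliton_profile s C x)"
    by (rule delta_op_preimage_soliton_profile_deriv[OF s C nondeg dom2 op2])
  have "delta_op (s\<^sup>2) u1 = (\<lambda>x. - c0 * soliton_profile s C x)"
    using arg_cong[where f="\<lambda>g x. - g x", OF op1] by simp
  then have "u1 = (\<lambda>x. c0 * soliton_profile_deriv s C D x)"
    by (rule delta_op_preimage_soliton_profile[OF s C CD dom1])
  with u2 show ?thesis
    by (simp add: chain_comb_def u)
qed

lemma gen_null_space_eq_chain_combs:
  assumes s: "s > 0" and C: "C \<noteq> 0" and CD: "s * b * D = C" and nondeg: "4 * s\<^sup>2 * D \<noteq> C"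
  shows "gen_null_space (s\<^sup>2) (2 * s + b) (2 * s) = {chain_comb s C D c0 c1 | c0 c1. True}"
proof (intro set_eqI iffI)
  fix u assume "u \<in> gen_null_space (s\<^sup>2) (2 * s + b) (2 * s)"
  then obtain k where "Cdom_pow k (s\<^sup>2) (2 * s + b) (2 * s) u" "(Cop (s\<^sup>2) ^^ k) u = ((\<lambda>x. 0), (\<lambda>x. 0))"
    by (auto simp: gen_null_space_def)
  then show "u \<in> {chain_comb s C D c0 c1 | c0 c1. True}"
  proof (induction k arbitrary: u)
    case 0
    then have "u = chain_comb s C D 0 0"
      by (simp add: chain_comb_zero)
    then show ?case by blast
  next
    case (Suc k)
    then have "Cdom (2 * s + b) (2 * s) u" "Cdom_pow k (s\<^sup>2) (2 * s + b) (2 * s) (Cop (s\<^sup>2) u)"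
      "(Cop (s\<^sup>2) ^^ k) (Cop (s\<^sup>2) u) = ((\<lambda>x. 0), (\<lambda>x. 0))"
      by (simp_all add: funpow_Suc_right del: funpow.simps)
    with Suc.IH obtain c0 c1 where "Cop (s\<^sup>2) u = chain_comb s C D c0 c1"
      by blast
    with Cop_preimage_chain_comb[OF s C CD nondeg \<open>Cdom (2 * s + b) (2 * s) u\<close>] show ?case
      by blast
  qed
next
  fix u assume "u \<in> {chain_comb s C D c0 c1 | c0 c1. True}"
  then obtain c0 c1 where u: "u = chain_comb s C D c0 c1" by blast
  have "Cdom_pow (Suc (Suc 0)) (s\<^sup>2) (2 * s + b) (2 * s) u"
    "(Cop (s\<^sup>2) ^^ Suc (Suc 0)) u = ((\<lambda>x. 0), (\<lambda>x. 0))"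
    using s CD by (simp_all add: u Cop_chain_comb Cdom_chain_comb chain_comb_zero)
  then show "u \<in> gen_null_space (s\<^sup>2) (2 * s + b) (2 * s)"
    unfolding gen_null_space_def by blast
qed

lemma amplitude_has_real_derivative:
  fixes a a' Cfun :: "real \<Rightarrow> real"
  assumes a_deriv: "\<And>x. (a has_real_derivative a' x) (at x)"
    and nonzero: "a (C\<^sup>2) * a' (C\<^sup>2) * C \<noteq> 0"
    and Cfun_at: "Cfun ((a (C\<^sup>2))\<^sup>2 / 4) = C"
    and Cfun_cont: "isCont Cfun ((a (C\<^sup>2))\<^sup>2 / 4)"
    and Cfun_inv: "\<exists>e>0. \<forall>w. \<bar>w - (a (C\<^sup>2))\<^sup>2 / 4\<bar> < e \<longrightarrow> (a ((Cfun w)\<^sup>2))\<^sup>2 / 4 = w"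
  shows "(Cfun has_real_derivative 1 / (a (C\<^sup>2) * a' (C\<^sup>2) * C)) (at ((a (C\<^sup>2))\<^sup>2 / 4))"
proof -
  let ?w = "(a (C\<^sup>2))\<^sup>2 / 4"
  obtain e where e: "e > 0" "\<And>w. \<bar>w - ?w\<bar> < e \<Longrightarrow> (a ((Cfun w)\<^sup>2))\<^sup>2 / 4 = w"
    using Cfun_inv by blast
  have "((\<lambda>c. a (c\<^sup>2)) has_real_derivative a' (C\<^sup>2) * (2 * C)) (at C)"
    using DERIV_chain2[OF a_deriv DERIV_power[OF DERIV_ident, of 2 C UNIV]] by simp
  from DERIV_cdivide[OF DERIV_power[OF this, of 2], of 4]
  have "((\<lambda>c. (a (c\<^sup>2))\<^sup>2 / 4) has_real_derivative a (C\<^sup>2) * a' (C\<^sup>2) * C) (at (Cfun ?w))"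
    unfolding Cfun_at by (simp add: algebra_simps)
  then have "(Cfun has_real_derivative inverse (a (C\<^sup>2) * a' (C\<^sup>2) * C)) (at ?w)"
    by (rule DERIV_inverse_function[where a="?w - e" and b="?w + e", OF _ nonzero _ _ _ Cfun_cont])
       (use e in \<open>auto simp: abs_less_iff\<close>)
  then show ?thesis by (simp add: inverse_eq_divide)
qed

lemma deriv_amplitude_exp_profile:
  fixes Cfun :: "real \<Rightarrow> real"
  assumes Cfun: "(Cfun has_real_derivative D) (at \<omega>)" and \<omega>: "\<omega> > 0"
  shows "deriv (\<lambda>w. Cfun w * exp (- sqrt w * \<bar>x\<bar>)) \<omega> =
         (D - Cfun \<omega> * \<bar>x\<bar> / (2 * sqrt \<omega>)) * exp (- sqrt \<omega> * \<bar>x\<bar>)"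
proof -
  have "((\<lambda>w. exp (- sqrt w * \<bar>x\<bar>)) has_real_derivative
          exp (- sqrt \<omega> * \<bar>x\<bar>) * (- (inverse (sqrt \<omega>) / 2) * \<bar>x\<bar>)) (at \<omega>)"
    by (rule DERIV_chain2[OF DERIV_exp]) (rule DERIV_cmult_right[OF DERIV_minus[OF DERIV_real_sqrt[OF \<omega>]]])
  from DERIV_imp_deriv[OF DERIV_mult[OF Cfun this]] show ?thesis
    using \<omega> by (simp add: field_simps)
qed

lemma soliton_family_eq_chain_comb:
  fixes Cfun :: "real \<Rightarrow> real"
  assumes s: "s > 0" and C: "Cfun (s\<^sup>2) = C" and D: "(Cfun has_real_derivative D) (at (s\<^sup>2))"
  shows "((\<lambda>x. 0), (\<lambda>x. complex_of_real (Cfun (s\<^sup>2) * exp (- sqrt (s\<^sup>2) * \<bar>x\<bar>)))) =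
           chain_comb s C D 1 0"
    and "((\<lambda>x. complex_of_real (deriv (\<lambda>w. Cfun w * exp (- sqrt w * \<bar>x\<bar>)) (s\<^sup>2))), (\<lambda>x. 0)) =
           chain_comb s C D 0 1"
proof -
  from deriv_amplitude_exp_profile[OF D] s
  have "deriv (\<lambda>w. Cfun w * exp (- sqrt w * \<bar>x\<bar>)) (s\<^sup>2) =
      (D - C / (2 * s) * \<bar>x\<bar>) * exp (- s * \<bar>x\<bar>)" for x
    by (simp add: C)
  then show "((\<lambda>x. complex_of_real (deriv (\<lambda>w. Cfun w * exp (- sqrt w * \<bar>x\<bar>)) (s\<^sup>2))), (\<lambda>x. 0)) =
      chain_comb s C D 0 1"
    by (simp add: chain_comb_def soliton_profile_deriv_def quad_exp_def fun_eq_iff)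
  show "((\<lambda>x. 0), (\<lambda>x. complex_of_real (Cfun (s\<^sup>2) * exp (- sqrt (s\<^sup>2) * \<bar>x\<bar>)))) =
      chain_comb s C D 1 0"
    using s by (simp add: chain_comb_def soliton_profile_def quad_exp_def fun_eq_iff C)
qed

lemma spectral_condition_imp_less:
  fixes a0 a1 c :: real
  assumes c: "c > 0" and a0: "a0 > 0" and spectral: "a1 < 0 \<or> (0 < a1 \<and> a1 < a0 / (sqrt 2 * c\<^sup>2))"
  shows "a1 * c\<^sup>2 < a0"
proof (cases "a1 < 0")
  case True
  then have "a1 * c\<^sup>2 < 0"
    using c by (simp add: mult_neg_pos)
  with a0 show ?thesis by simp
next
  case False
  then have "a1 * c\<^sup>2 < a0 / sqrt 2"
    using spectral c by (simp add: field_simps)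
  also have "a0 / sqrt 2 \<le> a0" using a0 by (simp add: field_simps)
  finally show ?thesis .
qed

theorem lemma6p1:
  fixes a a' :: "real \<Rightarrow> real" and C :: real and Cfun :: "real \<Rightarrow> real"
  assumes a_deriv: "\<forall>x. (a has_real_derivative a' x) (at x)"
      and a'_cont: "continuous_on UNIV a'"
      and C_pos: "C > 0"
      and a_pos: "a (C\<^sup>2) > 0"
      and spectral: "a' (C\<^sup>2) < 0 \<or> (0 < a' (C\<^sup>2) \<and> a' (C\<^sup>2) < a (C\<^sup>2) / (sqrt 2 * C\<^sup>2))"
      and Cfun_at: "Cfun ((a (C\<^sup>2))\<^sup>2 / 4) = C"
      and Cfun_cont: "isCont Cfun ((a (C\<^sup>2))\<^sup>2 / 4)"
      and Cfun_inv: "\<exists>e>0. \<forall>w. \<bar>w - (a (C\<^sup>2))\<^sup>2 / 4\<bar> < e \<longrightarrow>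
                        (a ((Cfun w)\<^sup>2))\<^sup>2 / 4 = w"
  shows "let \<omega> = (a (C\<^sup>2))\<^sup>2 / 4;
             \<alpha> = a (C\<^sup>2);
             b = 2 * a' (C\<^sup>2) * C\<^sup>2;
             T0 = ((\<lambda>x. 0), (\<lambda>x. complex_of_real (Cfun \<omega> * exp (- sqrt \<omega> * \<bar>x\<bar>))));
             T1 = ((\<lambda>x. complex_of_real
                        (deriv (\<lambda>w. Cfun w * exp (- sqrt w * \<bar>x\<bar>)) \<omega>)), (\<lambda>x. 0))
         in Cdom (\<alpha> + b) \<alpha> T0 \<and> Cdom (\<alpha> + b) \<alpha> T1 \<and>
            Cop \<omega> T0 = ((\<lambda>x. 0), (\<lambda>x. 0)) \<and>
            Cop \<omega> T1 = T0 \<and>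
            (\<forall>c0 c1. vadd (vscale c0 T0) (vscale c1 T1) = ((\<lambda>x. 0), (\<lambda>x. 0))
                       \<longrightarrow> c0 = 0 \<and> c1 = 0) \<and>
            gen_null_space \<omega> (\<alpha> + b) \<alpha> = {vadd (vscale c0 T0) (vscale c1 T1) | c0 c1. True}"
proof -
  define \<alpha> where "\<alpha> = a (C\<^sup>2)"
  define s where "s = \<alpha> / 2"
  define b where "b = 2 * a' (C\<^sup>2) * C\<^sup>2"
  define D where "D = 1 / (\<alpha> * a' (C\<^sup>2) * C)"
  have a'_nonzero: "a' (C\<^sup>2) \<noteq> 0" using spectral by auto
  have s: "s > 0" and \<alpha>: "\<alpha> = 2 * s" and \<omega>: "\<alpha>\<^sup>2 / 4 = s\<^sup>2"
    using a_pos by (simp_all add: s_def \<alpha>_def power_divide)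
  have CD: "s * b * D = C" and D: "D \<noteq> 0"
    using s a'_nonzero C_pos by (simp_all add: \<alpha> b_def D_def field_simps power2_eq_square)
  have nondeg: "4 * s\<^sup>2 * D \<noteq> C"
    using spectral_condition_imp_less[OF C_pos a_pos spectral, folded \<alpha>_def] s a'_nonzero C_pos
    by (auto simp: \<alpha> D_def field_simps power2_eq_square)
  have Cfun': "(Cfun has_real_derivative D) (at (s\<^sup>2))"
    using amplitude_has_real_derivative[OF a_deriv[rule_format] _ Cfun_at Cfun_cont Cfun_inv]
      a_pos a'_nonzero C_pos by (simp add: D_def flip: \<alpha>_def \<omega>)
  have Cfun_s: "Cfun (s\<^sup>2) = C"
    using Cfun_at by (simp only: \<alpha>_def[symmetric] \<omega>)
  note T = soliton_family_eq_chain_comb[OF s Cfun_s Cfun']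
  show ?thesis
    unfolding Let_def \<alpha>_def[symmetric] b_def[symmetric] unfolding \<omega> T
      chain_comb_eq_vadd_vscale[symmetric] unfolding \<alpha>
    using Cdom_chain_comb[OF s CD] Cop_chain_comb[OF s] chain_comb_zero
      chain_comb_eq_0_iff[of C D s] gen_null_space_eq_chain_combs[OF s _ CD nondeg] C_pos D
    by auto
qed

end
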